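(* Let $x,y,z$ be nodes of a finite, connected, unweighted, undirected graph and let $m$ be a generalized median of $\{x,y,z\}$. Then for every node $p\in I_{xm}$, $d(y,p)\geq d(y,m)$.
   Context: $d$ is the shortest-path distance; $I_{xm}=\{w: d(x,w)+d(w,m)=d(x,m)\}$. A generalized median of $\{x,y,z\}$ is a node minimizing $d(u,x)+d(u,y)+d(u,z)$ over all nodes $u$. *)

theory Defs
  imports Main
begin

definition graph :: "'a set \<Rightarrow> ('a \<Rightarrow> 'a \<Rightarrow> bool) \<Rightarrow> bool" where
  "graph V E \<longleftrightarrow> finite V \<and> (\<forall>u v. E u v \<longrightarrow> u \<in> V \<and> v \<in> V)
     \<and> (\<forall>u v. E u v \<longrightarrow> E v u) \<and> (\<forall>u. \<not> E u u)"

definition walk :: "('a \<Rightarrow> 'a \<Rightarrow> bool) \<Rightarrow> 'a list \<Rightarrow> bool" where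
  "walk E xs \<longleftrightarrow> xs \<noteq> [] \<and> (\<forall>i. Suc i < length xs \<longrightarrow> E (xs ! i) (xs ! Suc i))"

definition connected_graph :: "'a set \<Rightarrow> ('a \<Rightarrow> 'a \<Rightarrow> bool) \<Rightarrow> bool" where
  "connected_graph V E \<longleftrightarrow> V \<noteq> {} \<and>
     (\<forall>u\<in>V. \<forall>v\<in>V. \<exists>xs. walk E xs \<and> hd xs = u \<and> last xs = v)"

definition dist :: "('a \<Rightarrow> 'a \<Rightarrow> bool) \<Rightarrow> 'a \<Rightarrow> 'a \<Rightarrow> nat" where
  "dist E u v = (LEAST n. \<exists>xs. walk E xs \<and> hd xs = u \<and> last xs = v \<and> length xs = Suc n)"

definition interval :: "'a set \<Rightarrow> ('a \<Rightarrow> 'a \<Rightarrow> bool) \<Rightarrow> 'a \<Rightarrow> 'a \<Rightarrow> 'a set" where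
  "interval V E x m = {w \<in> V. dist E x w + dist E w m = dist E x m}"

definition generalized_median :: "'a set \<Rightarrow> ('a \<Rightarrow> 'a \<Rightarrow> bool) \<Rightarrow> 'a \<Rightarrow> 'a \<Rightarrow> 'a \<Rightarrow> 'a \<Rightarrow> bool" where
  "generalized_median V E x y z m \<longleftrightarrow> m \<in> V \<and>
     (\<forall>u\<in>V. dist E m x + dist E m y + dist E m z \<le> dist E u x + dist E u y + dist E u z)"

end

theory Submission
  imports Defs
begin

text \<open>Since \<open>p\<close> lies on a shortest \<open>x\<close>-\<open>m\<close> path, moving from \<open>m\<close> to \<open>p\<close> saves
  \<open>d(p,m)\<close> towards \<open>x\<close> and, by the triangle inequality, costs at most \<open>d(p,m)\<close> towards \<open>z\<close>.
  Minimality of the median sum at \<open>m\<close> therefore forbids any gain towards \<open>y\<close>.\<close>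

lemma walk_singleton [simp]: "walk E [a]"
  by (simp add: walk_def)

lemma walk_Cons_Cons [simp]: "walk E (a # b # xs) \<longleftrightarrow> E a b \<and> walk E (b # xs)"
proof
  assume "walk E (a # b # xs)"
  then have "\<forall>i. Suc i < length (a # b # xs) \<longrightarrow> E ((a # b # xs) ! i) ((a # b # xs) ! Suc i)"
    by (simp add: walk_def)
  from this[rule_format, of 0] this[rule_format, of "Suc _"]
  show "E a b \<and> walk E (b # xs)" by (auto simp: walk_def)
next
  assume "E a b \<and> walk E (b # xs)"
  then show "walk E (a # b # xs)"
    by (auto simp: walk_def nth_Cons split: nat.split)
qed

lemma walk_append:
  assumes "walk E xs" "walk E ys" "last xs = hd ys"
  shows "walk E (xs @ tl ys)"
  using assms
proof (induction xs rule: induct_list012)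
  case 1 then show ?case by (simp add: walk_def)
next
  case (2 a) then show ?case by (cases ys) auto
next
  case (3 a b xs) then show ?case by simp
qed

lemma walk_rev:
  assumes "symp E" "walk E xs"
  shows "walk E (rev xs)"
  using assms(2)
proof (induction xs rule: induct_list012)
  case 1 then show ?case by (simp add: walk_def)
next
  case (2 a) then show ?case by simp
next
  case (3 a b xs)
  then have "walk E (rev (b # xs))" "walk E [b, a]"
    using assms(1) by (auto dest: sympD)
  from walk_append[OF this] show ?case by simp
qed

text \<open>No connectivity is needed: the two \<open>LEAST\<close> predicates coincide, so even the junk
  values for unreachable pairs agree.\<close>

lemma dist_commute:
  assumes "symp E"
  shows "dist E u v = dist E v u"
proof -
  have "(\<exists>xs. walk E xs \<and> hd xs = u \<and> last xs = v \<and> length xs = Suc n)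
      \<Longrightarrow> (\<exists>xs. walk E xs \<and> hd xs = v \<and> last xs = u \<and> length xs = Suc n)" for u v n
    by (metis assms walk_rev hd_rev last_rev length_rev)
  then show ?thesis
    unfolding dist_def by (intro arg_cong[where f = Least] ext iffI)
qed

lemma shortest_walk_exists:
  assumes "walk E xs" "hd xs = u" "last xs = v"
  obtains ys where "walk E ys" "hd ys = u" "last ys = v" "length ys = Suc (dist E u v)"
proof -
  have "length xs = Suc (length xs - 1)"
    using assms(1) by (simp add: walk_def)
  then have "\<exists>n. \<exists>xs. walk E xs \<and> hd xs = u \<and> last xs = v \<and> length xs = Suc n"
    using assms by metis
  then have "\<exists>xs. walk E xs \<and> hd xs = u \<and> last xs = v \<and> length xs = Suc (dist E u v)"
    unfolding dist_def by (rule LeastI_ex)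
  with that show thesis by blast
qed

lemma dist_le_walk_length:
  assumes "walk E xs" "hd xs = u" "last xs = v" "length xs = Suc n"
  shows "dist E u v \<le> n"
  unfolding dist_def using assms by (blast intro: Least_le)

lemma dist_triangle:
  assumes "connected_graph V E" "u \<in> V" "v \<in> V" "w \<in> V"
  shows "dist E u w \<le> dist E u v + dist E v w"
proof -
  obtain xs where "walk E xs" "hd xs = u" "last xs = v"
    using assms(1-3) unfolding connected_graph_def by blast
  then obtain xs where xs: "walk E xs" "hd xs = u" "last xs = v" "length xs = Suc (dist E u v)"
    by (rule shortest_walk_exists)
  obtain ys where "walk E ys" "hd ys = v" "last ys = w"
    using assms(1,3,4) unfolding connected_graph_def by blast
  then obtain ys where ys: "walk E ys" "hd ys = v" "last ys = w" "length ys = Suc (dist E v w)"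
    by (rule shortest_walk_exists)
  have "xs \<noteq> []" "ys \<noteq> []"
    using xs ys by (auto simp: walk_def)
  then have "hd (xs @ tl ys) = u" "last (xs @ tl ys) = w"
    using xs ys by (cases ys; auto)+
  moreover have "walk E (xs @ tl ys)"
    using walk_append[OF xs(1) ys(1)] xs(3) ys(2) by simp
  moreover have "length (xs @ tl ys) = Suc (dist E u v + dist E v w)"
    using xs ys by simp
  ultimately show ?thesis
    by (intro dist_le_walk_length)
qed

theorem lemmaE3:
  fixes V :: "'a set" and E :: "'a \<Rightarrow> 'a \<Rightarrow> bool" and x y z m p :: 'a
  assumes "graph V E" and "connected_graph V E"
    and "x \<in> V" and "y \<in> V" and "z \<in> V"
    and "generalized_median V E x y z m"
    and "p \<in> interval V E x m"
  shows "dist E y p \<ge> dist E y m"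
proof -
  have "symp E"
    using assms(1) by (auto simp: graph_def intro: sympI)
  have "m \<in> V" "p \<in> V" and on_geodesic: "dist E x p + dist E p m = dist E x m"
    using assms(6,7) by (simp_all add: generalized_median_def interval_def)
  then have median: "dist E m x + dist E m y + dist E m z \<le> dist E p x + dist E p y + dist E p z"
    using assms(6) by (simp add: generalized_median_def)
  have "dist E p z \<le> dist E p m + dist E m z"
    using assms(2) \<open>p \<in> V\<close> \<open>m \<in> V\<close> assms(5) by (rule dist_triangle)
  moreover have "dist E p x = dist E x p" "dist E m x = dist E x m"
    "dist E p y = dist E y p" "dist E m y = dist E y m"
    using \<open>symp E\<close> by (rule dist_commute)+
  ultimately show ?thesis
    using median on_geodesic by linarith
qed

end
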